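(* Let $\epsilon>0$ and let $\theta\in\Theta_1\cap\mathbb{V}$ be locally optimal, i.e. $\theta=\operatorname{argsup}_{v\in\Theta\cap\mathbb{V}_{D(\theta)}}L(v)$. If $\sup_{\tau\ge0}DL(\theta,V_\tau)<\epsilon$, then \[L(\hat\theta)-L(\theta)\le\hat\theta'(x_n)\,\epsilon<\beta\epsilon.\]
   Context: Let $f$ be a probability density on $\mathbb{R}_{\ge0}$ satisfying the standing assumptions: (A1) $f$ is continuous and $f(x)>0$ for all $x>0$; (A2) there is $\beta\in\mathbb{R}$ such that for every $\lambda\in\mathbb{R}$, $\int_0^\infty e^{\lambda x}f(x)\,dx<\infty$ if and only if $\lambda<\beta$, and $\lim_{\lambda\to\beta^-}\int_0^\infty e^{\lambda x}f(x)\,dx=\infty$; (A3) for every $\lambda\in\mathbb{R}$, $\int_0^\infty e^{\lambda x}f(x)dx<\infty$ implies $\int_0^\infty x^2e^{\lambda x}f(x)dx<\infty$. Let $M$ be the measure on $\mathbb{R}_{\ge0}$ with density $f$. Fix data $x_1\le\dots\le x_n$ in $\mathbb{R}_{\ge0}$ with empirical distribution $\hat P=\frac1n\sum_{i=1}^n\delta_{x_i}$. $\Theta$ is the set of convex non-decreasing functions $\theta:\mathbb{R}_{\ge0}\to\mathbb{R}$, and $\Theta_1=\{\theta\in\Theta:\int e^{\theta}dM=1\}$. For $\theta\in\Theta$, $L(\theta):=\int\theta\,d\hat P-\int e^{\theta}\,dM+1\in[-\infty,\infty)$. For $\theta\in\Theta$ and a function $v$, $DL(\theta,v):=\lim_{t\to0^+}\frac{L(\theta+tv)-L(\theta)}{t}$.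 $\mathbb{V}$ is the set of continuous piecewise linear functions $v:\mathbb{R}_{\ge0}\to\mathbb{R}$ with finitely many breakpoints; $D(v)=\{\tau\ge0: v'(\tau-)\neq v'(\tau+)\}$ is its set of breakpoints; for finite $S\subset\mathbb{R}_{\ge0}$, $\mathbb{V}_S=\{v\in\mathbb{V}:D(v)\subseteq S\}$. For $\tau\ge0$, $V_\tau(x):=(x-\tau)^+$. It is known (Dümbgen) that $L$ has a unique maximizer $\hat\theta$ over $\Theta$; it belongs to $\Theta_1\cap\mathbb{V}$ and its breakpoints lie in $(\{0\}\cup[x_1,x_n])\setminus\{x_1,\dots,x_n\}$, so in particular $\hat\theta$ is differentiable at $x_n$. *)

theory Defs
  imports "HOL-Analysis.Analysis"
begin

text \<open>Measure M with density f on the nonnegative reals, as a function of an exponent.\<close>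
definition expint :: "(real \<Rightarrow> real) \<Rightarrow> (real \<Rightarrow> real) \<Rightarrow> ennreal" where
  "expint f g = (\<integral>\<^sup>+ x\<in>{0..}. ennreal (exp (g x) * f x) \<partial>lborel)"

definition standing_assms :: "(real \<Rightarrow> real) \<Rightarrow> real \<Rightarrow> bool" where
  "standing_assms f \<beta> \<longleftrightarrow>
     (\<forall>x\<ge>0. f x \<ge> 0) \<and>
     (\<integral>\<^sup>+ x\<in>{0..}. ennreal (f x) \<partial>lborel) = 1 \<and>
     continuous_on {0..} f \<and> (\<forall>x>0. f x > 0) \<and>
     (\<forall>l::real. expint f (\<lambda>x. l * x) < \<infinity> \<longleftrightarrow> l < \<beta>) \<and>
     ((\<lambda>l. expint f (\<lambda>x. l * x)) \<longlongrightarrow> \<infinity>) (at_left \<beta>) \<and>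
     (\<forall>l::real. expint f (\<lambda>x. l * x) < \<infinity> \<longrightarrow>
        (\<integral>\<^sup>+ x\<in>{0..}. ennreal (x\<^sup>2 * exp (l * x) * f x) \<partial>lborel) < \<infinity>)"

definition Theta :: "(real \<Rightarrow> real) set" where
  "Theta = {\<theta>. convex_on {0..} \<theta> \<and> mono_on {0..} \<theta>}"

definition Theta1 :: "(real \<Rightarrow> real) \<Rightarrow> (real \<Rightarrow> real) set" where
  "Theta1 f = {\<theta>\<in>Theta. expint f \<theta> = 1}"

definition LL :: "(real \<Rightarrow> real) \<Rightarrow> real list \<Rightarrow> (real \<Rightarrow> real) \<Rightarrow> ereal" where
  "LL f xs \<theta> = ereal (sum_list (map \<theta> xs) / real (length xs)) - enn2ereal (expint f \<theta>) + 1"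

definition DL :: "(real \<Rightarrow> real) \<Rightarrow> real list \<Rightarrow> (real \<Rightarrow> real) \<Rightarrow> (real \<Rightarrow> real) \<Rightarrow> ereal" where
  "DL f xs \<theta> v = Lim (at_right (0::real))
      (\<lambda>t. (LL f xs (\<lambda>x. \<theta> x + t * v x) - LL f xs \<theta>) / ereal t)"

definition PL :: "(real \<Rightarrow> real) set" where
  "PL = {v. continuous_on {0..} v \<and>
          (\<exists>S. finite S \<and> (\<forall>a b. 0 \<le> a \<and> a < b \<and> {a<..<b} \<inter> S = {} \<longrightarrow>
              (\<exists>c d. \<forall>x\<in>{a..b}. v x = c * x + d)))}"

definition rderiv :: "(real \<Rightarrow> real) \<Rightarrow> real \<Rightarrow> real" where
  "rderiv v \<tau> = Lim (at_right \<tau>) (\<lambda>x. (v x - v \<tau>) / (x - \<tau>))"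

definition lderiv :: "(real \<Rightarrow> real) \<Rightarrow> real \<Rightarrow> real" where
  "lderiv v \<tau> = (if \<tau> = 0 then 0 else Lim (at_left \<tau>) (\<lambda>x. (v x - v \<tau>) / (x - \<tau>)))"

definition breakpoints :: "(real \<Rightarrow> real) \<Rightarrow> real set" where
  "breakpoints v = {\<tau>. \<tau> \<ge> 0 \<and> lderiv v \<tau> \<noteq> rderiv v \<tau>}"

definition PL_on :: "real set \<Rightarrow> (real \<Rightarrow> real) set" where
  "PL_on S = {v\<in>PL. breakpoints v \<subseteq> S}"

definition Vtau :: "real \<Rightarrow> real \<Rightarrow> real" where
  "Vtau \<tau> x = max (x - \<tau>) 0"

end

theory Submission
  imports Defs
begin

(*
  On [0, \<infinity>) every element of Theta \<inter> PL is a hinge combination a + \<Sum> c\<^sub>\<sigma> V\<^sub>\<sigma>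
  with c\<^sub>\<sigma> \<ge> 0. Its right derivative at x is the sum of the c\<^sub>\<sigma> with \<sigma> \<le> x, and its
  final slope \<Sum> c\<^sub>\<sigma> is below \<beta> as soon as its exponential is M-integrable.

  For \<theta> \<in> Theta1 f let Q be the probability measure e\<^sup>\<theta> dM and P the empirical
  distribution. Differentiating under the integral sign gives DL(\<theta>, h) = \<integral>h dP - \<integral>h dQ
  for every h of linear growth. Local optimality of \<theta> admits the rescalings s \<theta>, so the
  derivative in direction -\<theta> is \<le> 0, that is \<integral>\<theta> dQ \<le> \<integral>\<theta> dP; and e\<^sup>y \<ge> 1 + y under Q
  gives \<integral>\<theta>h dQ \<le> \<integral>\<theta> dQ. Hence, writing \<theta>h = a' + \<Sum> c'\<^sub>\<sigma> V\<^sub>\<sigma>,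
    L(\<theta>h) - L(\<theta>) = \<integral>\<theta>h dP - \<integral>\<theta> dP \<le> \<integral>\<theta>h d(P - Q) = \<Sum> c'\<^sub>\<sigma> DL(\<theta>, V\<^sub>\<sigma>).
  A term with \<sigma> > x\<^sub>n is \<le> 0 because V\<^sub>\<sigma> vanishes on the data, the others are below
  c'\<^sub>\<sigma> \<epsilon>, and the sum of the c'\<^sub>\<sigma> with \<sigma> \<le> x\<^sub>n is the right derivative of \<theta>h at x\<^sub>n.
*)

section \<open>Hinge combinations\<close>

definition hinge_comb :: "real \<Rightarrow> (real \<Rightarrow> real) \<Rightarrow> real set \<Rightarrow> real \<Rightarrow> real" where
  "hinge_comb a c T x = a + (\<Sum>\<sigma>\<in>T. c \<sigma> * Vtau \<sigma> x)"

lemma Vtau_measurable [measurable]: "Vtau \<sigma> \<in> borel_measurable borel"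
  unfolding Vtau_def by measurable

lemma hinge_comb_measurable [measurable]: "hinge_comb a c T \<in> borel_measurable borel"
  unfolding hinge_comb_def[abs_def] by measurable

lemma hinge_comb_insert:
  assumes "finite T" "k \<notin> T"
  shows "hinge_comb a (c(k := \<gamma>)) (insert k T) x = hinge_comb a c T x + \<gamma> * Vtau k x"
proof -
  have "(\<Sum>\<sigma>\<in>T. (c(k := \<gamma>)) \<sigma> * Vtau \<sigma> x) = (\<Sum>\<sigma>\<in>T. c \<sigma> * Vtau \<sigma> x)"
    using assms(2) by (intro sum.cong) auto
  then show ?thesis
    using assms by (simp add: hinge_comb_def)
qed

lemma hinge_comb_cmult: "hinge_comb (s * a) (\<lambda>\<sigma>. s * c \<sigma>) T x = s * hinge_comb a c T x"
  by (simp add: hinge_comb_def distrib_left sum_distrib_left mult.assoc)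

lemma hinge_comb_bounds:
  assumes "T \<subseteq> {0..}" "\<forall>\<sigma>\<in>T. 0 \<le> c \<sigma>" "0 \<le> x"
  shows "a \<le> hinge_comb a c T x" "hinge_comb a c T x \<le> a + sum c T * x"
proof -
  show "a \<le> hinge_comb a c T x"
    using assms by (auto simp: hinge_comb_def Vtau_def intro!: sum_nonneg)
  have "(\<Sum>\<sigma>\<in>T. c \<sigma> * Vtau \<sigma> x) \<le> (\<Sum>\<sigma>\<in>T. c \<sigma> * x)"
    using assms by (intro sum_mono mult_left_mono) (auto simp: Vtau_def)
  then show "hinge_comb a c T x \<le> a + sum c T * x"
    by (simp add: hinge_comb_def sum_distrib_right)
qed

lemma hinge_comb_ge_linear:
  assumes "\<forall>\<sigma>\<in>T. 0 \<le> c \<sigma>"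
  shows "a - (\<Sum>\<sigma>\<in>T. c \<sigma> * \<sigma>) + sum c T * x \<le> hinge_comb a c T x"
proof -
  have "(\<Sum>\<sigma>\<in>T. c \<sigma> * (x - \<sigma>)) \<le> (\<Sum>\<sigma>\<in>T. c \<sigma> * Vtau \<sigma> x)"
    using assms by (intro sum_mono mult_left_mono) (auto simp: Vtau_def)
  then show ?thesis
    by (simp add: hinge_comb_def sum_distrib_right sum_subtractf right_diff_distrib)
qed

lemma Vtau_linear_growth:
  assumes "0 \<le> x"
  shows "\<bar>Vtau \<sigma> x\<bar> \<le> (1 + \<bar>\<sigma>\<bar>) * (1 + x)"
proof -
  have "\<bar>Vtau \<sigma> x\<bar> \<le> x + \<bar>\<sigma>\<bar>"
    using assms by (auto simp: Vtau_def)
  also have "\<dots> \<le> (1 + \<bar>\<sigma>\<bar>) * (1 + x)"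
    using assms by (simp add: algebra_simps)
  finally show ?thesis .
qed

section \<open>Piecewise linear functions as hinge combinations\<close>

definition affine_off :: "real set \<Rightarrow> (real \<Rightarrow> real) \<Rightarrow> bool" where
  "affine_off S v \<longleftrightarrow>
     (\<forall>a b. 0 \<le> a \<and> a < b \<and> {a<..<b} \<inter> S = {} \<longrightarrow> (\<exists>c d. \<forall>x\<in>{a..b}. v x = c * x + d))"

lemma affine_offI:
  assumes "\<And>a b. 0 \<le> a \<Longrightarrow> a < b \<Longrightarrow> {a<..<b} \<inter> S = {} \<Longrightarrow> \<exists>c d. \<forall>x\<in>{a..b}. v x = c * x + d"
  shows "affine_off S v"
  using assms unfolding affine_off_def by blast

lemma affine_offE:
  assumes "affine_off S v" "0 \<le> a" "a < b" "{a<..<b} \<inter> S = {}"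
  obtains c d where "\<forall>x\<in>{a..b}. v x = c * x + d"
  using assms unfolding affine_off_def by blast

lemma PL_iff_affine_off: "v \<in> PL \<longleftrightarrow> continuous_on {0..} v \<and> (\<exists>S. finite S \<and> affine_off S v)"
  unfolding PL_def affine_off_def by blast

lemma affine_off_restrict_pos:
  assumes "affine_off S v"
  shows "affine_off (S \<inter> {0<..}) v"
proof (rule affine_offI)
  fix a b :: real
  assume ab: "0 \<le> a" "a < b" "{a<..<b} \<inter> (S \<inter> {0<..}) = {}"
  then have "{a<..<b} \<inter> S = {}"
    by auto
  then show "\<exists>c d. \<forall>x\<in>{a..b}. v x = c * x + d"
    using affine_offE[OF assms ab(1,2)] by blast
qed

lemma affine_off_mono: "affine_off S v \<Longrightarrow> S \<subseteq> S' \<Longrightarrow> affine_off S' v"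
  unfolding affine_off_def by blast

lemma affine_off_diff:
  assumes "affine_off S v" "affine_off S w"
  shows "affine_off S (\<lambda>x. v x - \<gamma> * w x)"
proof (rule affine_offI)
  fix a b :: real
  assume ab: "0 \<le> a" "a < b" "{a<..<b} \<inter> S = {}"
  obtain c d where "\<forall>x\<in>{a..b}. v x = c * x + d"
    using affine_offE[OF assms(1) ab] by blast
  moreover obtain c' d' where "\<forall>x\<in>{a..b}. w x = c' * x + d'"
    using affine_offE[OF assms(2) ab] by blast
  ultimately
  have "\<forall>x\<in>{a..b}. v x - \<gamma> * w x = (c - \<gamma> * c') * x + (d - \<gamma> * d')"
    by (simp add: algebra_simps)
  then show "\<exists>c d. \<forall>x\<in>{a..b}. v x - \<gamma> * w x = c * x + d"
    by blast
qed

lemma affine_off_Vtau: "affine_off {k} (Vtau k)"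
proof (rule affine_offI)
  fix a b :: real
  assume "0 \<le> a" "a < b" "{a<..<b} \<inter> {k} = {}"
  then have "b \<le> k \<or> k \<le> a"
    by auto
  then show "\<exists>c d. \<forall>x\<in>{a..b}. Vtau k x = c * x + d"
  proof
    assume "b \<le> k"
    then have "\<forall>x\<in>{a..b}. Vtau k x = 0 * x + 0"
      by (auto simp: Vtau_def)
    then show ?thesis by blast
  next
    assume "k \<le> a"
    then have "\<forall>x\<in>{a..b}. Vtau k x = 1 * x + - k"
      by (auto simp: Vtau_def)
    then show ?thesis by blast
  qed
qed

lemma affine_coeffs_unique:
  fixes p q :: real
  assumes "p < q" "\<forall>y\<in>{p..q}. c * y + d = c' * y + d'"
  shows "c = c'" "d = d'"
proof -
  have eqs: "c * p + d = c' * p + d'" "c * q + d = c' * q + d'"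
    using assms by auto
  then have "(c - c') * (q - p) = 0"
    by (simp add: algebra_simps)
  then show "c = c'"
    using assms(1) by simp
  then show "d = d'"
    using eqs by simp
qed

lemma affine_off_affine_beyond:
  assumes v: "affine_off K v" and K: "K \<subseteq> {..k}" and "0 \<le> k"
  obtains c d where "\<forall>x\<ge>k. v x = c * x + d"
proof -
  have affine_from_k: "\<exists>c d. \<forall>x\<in>{k..b}. v x = c * x + d" if "k < b" for b
  proof -
    have "{k<..<b} \<inter> K = {}"
      using K by auto
    then show ?thesis
      using affine_offE[OF v \<open>0 \<le> k\<close> \<open>k < b\<close>] by blast
  qed
  obtain c d where cd: "\<forall>x\<in>{k..k + 1}. v x = c * x + d"
    using affine_from_k[of "k + 1"] by force
  have "v x = c * x + d" if "k \<le> x" for x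
  proof -
    obtain c' d' where cd': "\<forall>y\<in>{k..x + 1}. v y = c' * y + d'"
      using affine_from_k[of "x + 1"] \<open>k \<le> x\<close> by force
    have "c * y + d = c' * y + d'" if "y \<in> {k..k + 1}" for y
      using cd cd' that \<open>k \<le> x\<close> by force
    then have "c = c'" "d = d'"
      using affine_coeffs_unique[of k "k + 1" c d c' d'] by auto
    then show ?thesis
      using cd' that by force
  qed
  then show ?thesis
    using that by blast
qed

lemma affine_off_remove_greatest:
  assumes w: "affine_off (insert k K) w" and K: "finite K" "\<forall>y\<in>K. y < k"
    and beyond: "\<forall>x\<ge>Max (insert 0 K). w x = c * x + d"
  shows "affine_off K w"
proof (rule affine_offI)
  fix a b :: real
  assume ab: "0 \<le> a" "a < b" "{a<..<b} \<inter> K = {}"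
  show "\<exists>c d. \<forall>x\<in>{a..b}. w x = c * x + d"
  proof (cases "k \<in> {a<..<b}")
    case True
    have "y \<le> a" if "y \<in> K" for y
    proof -
      have "y < k" "y \<notin> {a<..<b}"
        using that ab K(2) by auto
      then show ?thesis
        using True by auto
    qed
    then have "Max (insert 0 K) \<le> a"
      using K(1) ab by simp
    then show ?thesis
      using beyond by force
  next
    case False
    then have "{a<..<b} \<inter> insert k K = {}"
      using ab(3) by blast
    then show ?thesis
      using affine_offE[OF w ab(1,2)] by metis
  qed
qed

lemma affine_off_insert_greatest:
  assumes v: "affine_off (insert k K) v" and K: "finite K" "\<forall>y\<in>K. y < k" and "0 < k"
  obtains \<gamma> where "affine_off K (\<lambda>x. v x - \<gamma> * Vtau k x)"
proof -
  define k' where "k' = Max (insert 0 K)"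
  have k': "0 \<le> k'" "k' < k" "\<forall>y\<in>K. y \<le> k'"
    unfolding k'_def using K \<open>0 < k\<close> by auto
  obtain c1 d1 where left: "\<forall>x\<in>{k'..k}. v x = c1 * x + d1"
  proof -
    have "{k'<..<k} \<inter> insert k K = {}"
      using k'(3) by fastforce
    then show ?thesis
      using affine_offE[OF v k'(1,2)] that by blast
  qed
  have "insert k K \<subseteq> {..k}"
    using K(2) by auto
  moreover have "0 \<le> k"
    using \<open>0 < k\<close> by simp
  ultimately obtain c2 d2 where right: "\<forall>x\<ge>k. v x = c2 * x + d2"
    using affine_off_affine_beyond[OF v] by blast
  define w where "w x = v x - (c2 - c1) * Vtau k x" for x
  have "w x = c1 * x + d1" if "k' \<le> x" for x
  proof (cases "x \<le> k")
    case True
    then show ?thesis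
      using left that by (simp add: w_def Vtau_def)
  next
    case False
    have "c1 * k + d1 = c2 * k + d2"
      using left[rule_format, of k] right[rule_format, of k] k'(2) by simp
    then show ?thesis
      using right False by (simp add: w_def Vtau_def algebra_simps)
  qed
  moreover have "affine_off (insert k K) w"
    unfolding w_def
    by (rule affine_off_diff[OF v affine_off_mono[OF affine_off_Vtau]]) simp
  ultimately have "affine_off K w"
    using affine_off_remove_greatest[OF _ K] unfolding k'_def by blast
  then show ?thesis
    using that unfolding w_def by blast
qed

lemma hinge_representation_of_affine_off:
  assumes "finite K" "K \<subseteq> {0<..}" "affine_off K v"
  obtains a c where "\<forall>x\<ge>0. v x = hinge_comb a c (insert 0 K) x"
proof -
  have "\<exists>a c. \<forall>x\<ge>0. v x = hinge_comb a c (insert 0 K) x"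
    using assms
  proof (induction K arbitrary: v rule: finite_ranking_induct[where f = "\<lambda>x. x"])
    case empty
    obtain c d where "\<forall>x\<ge>0. v x = c * x + d"
      using affine_off_affine_beyond[OF empty.prems(2)] by auto
    then have "\<forall>x\<ge>0. v x = hinge_comb d (\<lambda>_. c) (insert 0 {}) x"
      by (simp add: hinge_comb_def Vtau_def)
    then show ?case
      by blast
  next
    case (insert k K)
    show ?case
    proof (cases "k \<in> K")
      case True
      then show ?thesis
        using insert by (simp add: insert_absorb)
    next
      case False
      have "\<forall>y\<in>K. y < k"
        using insert.hyps(2) False by (metis order.not_eq_order_implies_strict)
      moreover have "0 < k"
        using insert.prems(1) by simp
      ultimately obtain \<gamma> where "affine_off K (\<lambda>x. v x - \<gamma> * Vtau k x)"
        using affine_off_insert_greatest[OF insert.prems(2) insert.hyps(1)] by blast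
      then obtain a c where ac: "\<forall>x\<ge>0. v x - \<gamma> * Vtau k x = hinge_comb a c (insert 0 K) x"
        using insert.IH insert.prems(1) by blast
      have "k \<notin> insert 0 K"
        using False \<open>0 < k\<close> by simp
      then have "\<forall>x\<ge>0. v x = hinge_comb a (c(k := \<gamma>)) (insert k (insert 0 K)) x"
        using ac insert(1) by (simp add: hinge_comb_insert algebra_simps)
      then show ?thesis
        by (auto simp: insert_commute)
    qed
  qed
  then show ?thesis
    using that by blast
qed

lemma PL_hinge_representation:
  assumes "v \<in> PL"
  obtains T a c where "finite T" "T \<subseteq> {0..}" "\<forall>x\<ge>0. v x = hinge_comb a c T x"
proof -
  obtain S where "finite S" "affine_off S v"
    using assms unfolding PL_iff_affine_off by blast
  then obtain a c where "\<forall>x\<ge>0. v x = hinge_comb a c (insert 0 (S \<inter> {0<..})) x"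
    using hinge_representation_of_affine_off[of "S \<inter> {0<..}" v] affine_off_restrict_pos by blast
  moreover have "finite (insert 0 (S \<inter> {0<..}))" "insert 0 (S \<inter> {0<..}) \<subseteq> {0..}"
    using \<open>finite S\<close> by auto
  ultimately show ?thesis
    using that by blast
qed

lemma Vtau_increment_at_right:
  "\<forall>\<^sub>F x in at_right \<tau>. Vtau \<sigma> x - Vtau \<sigma> \<tau> = (if \<sigma> \<le> \<tau> then x - \<tau> else 0)"
proof (cases "\<sigma> \<le> \<tau>")
  case True
  show ?thesis
    using eventually_at_right_less[of \<tau>] by (rule eventually_mono) (use True in \<open>auto simp: Vtau_def\<close>)
next
  case False
  then have "\<tau> < \<sigma>"
    by simp
  show ?thesis
    using eventually_at_right_real[OF \<open>\<tau> < \<sigma>\<close>] by (rule eventually_mono) (use False in \<open>auto simp: Vtau_def\<close>)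
qed

lemma Vtau_increment_at_left:
  "\<forall>\<^sub>F x in at_left \<tau>. Vtau \<sigma> x - Vtau \<sigma> \<tau> = (if \<sigma> < \<tau> then x - \<tau> else 0)"
proof (cases "\<sigma> < \<tau>")
  case True
  show ?thesis
    using eventually_at_left_real[OF True] by (rule eventually_mono) (use True in \<open>auto simp: Vtau_def\<close>)
next
  case False
  have "\<forall>\<^sub>F x in at_left \<tau>. x \<in> {\<tau> - 1<..<\<tau>}"
    by (rule eventually_at_left_real) simp
  then show ?thesis
    by (rule eventually_mono) (use False in \<open>auto simp: Vtau_def\<close>)
qed

lemma hinge_comb_increment:
  assumes "finite T" "\<And>\<sigma>. \<forall>\<^sub>F x in F. Vtau \<sigma> x - Vtau \<sigma> \<tau> = (if P \<sigma> then x - \<tau> else 0)"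
  shows "\<forall>\<^sub>F x in F. hinge_comb a c T x - hinge_comb a c T \<tau> = sum c {\<sigma>\<in>T. P \<sigma>} * (x - \<tau>)"
proof -
  have "\<forall>\<^sub>F x in F. \<forall>\<sigma>\<in>T. Vtau \<sigma> x - Vtau \<sigma> \<tau> = (if P \<sigma> then x - \<tau> else 0)"
    using assms by (intro eventually_ball_finite) auto
  then show ?thesis
  proof (rule eventually_mono)
    fix x
    assume increments: "\<forall>\<sigma>\<in>T. Vtau \<sigma> x - Vtau \<sigma> \<tau> = (if P \<sigma> then x - \<tau> else 0)"
    have "hinge_comb a c T x - hinge_comb a c T \<tau> = (\<Sum>\<sigma>\<in>T. c \<sigma> * (Vtau \<sigma> x - Vtau \<sigma> \<tau>))"
      by (simp add: hinge_comb_def sum_subtractf right_diff_distrib)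
    also have "\<dots> = (\<Sum>\<sigma>\<in>T. (if P \<sigma> then c \<sigma> else 0) * (x - \<tau>))"
      using increments by (intro sum.cong) auto
    also have "\<dots> = sum c {\<sigma>\<in>T. P \<sigma>} * (x - \<tau>)"
      using assms(1) by (simp add: sum.inter_filter sum_distrib_right)
    finally show "hinge_comb a c T x - hinge_comb a c T \<tau> = sum c {\<sigma>\<in>T. P \<sigma>} * (x - \<tau>)" .
  qed
qed

lemma increment_at_right:
  assumes "finite T" "0 \<le> \<tau>" "\<forall>x\<ge>0. v x = hinge_comb a c T x"
  shows "\<forall>\<^sub>F x in at_right \<tau>. \<tau> < x \<and> v x - v \<tau> = sum c {\<sigma>\<in>T. \<sigma> \<le> \<tau>} * (x - \<tau>)"
proof -
  have "\<forall>\<^sub>F x in at_right \<tau>.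
      hinge_comb a c T x - hinge_comb a c T \<tau> = sum c {\<sigma>\<in>T. \<sigma> \<le> \<tau>} * (x - \<tau>)"
    by (rule hinge_comb_increment[OF assms(1) Vtau_increment_at_right])
  with eventually_at_right_less[of \<tau>] show ?thesis
    by eventually_elim (use assms(2,3) in simp)
qed

lemma increment_at_left:
  assumes "finite T" "0 < \<tau>" "\<forall>x\<ge>0. v x = hinge_comb a c T x"
  shows "\<forall>\<^sub>F x in at_left \<tau>. 0 < x \<and> x < \<tau> \<and> v x - v \<tau> = sum c {\<sigma>\<in>T. \<sigma> < \<tau>} * (x - \<tau>)"
proof -
  have "\<forall>\<^sub>F x in at_left \<tau>.
      hinge_comb a c T x - hinge_comb a c T \<tau> = sum c {\<sigma>\<in>T. \<sigma> < \<tau>} * (x - \<tau>)"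
    by (rule hinge_comb_increment[OF assms(1) Vtau_increment_at_left])
  with eventually_at_left_real[OF assms(2)] show ?thesis
    by eventually_elim (use assms(2,3) in simp)
qed

lemma Lim_difference_quotient:
  fixes v :: "real \<Rightarrow> real"
  assumes "F \<noteq> bot" "\<forall>\<^sub>F x in F. x \<noteq> \<tau> \<and> v x - v \<tau> = s * (x - \<tau>)"
  shows "Lim F (\<lambda>x. (v x - v \<tau>) / (x - \<tau>)) = s"
proof -
  have "\<forall>\<^sub>F x in F. (v x - v \<tau>) / (x - \<tau>) = s"
    using assms(2) by (rule eventually_mono) simp
  then show ?thesis
    by (intro tendsto_Lim[OF assms(1)] tendsto_eventually)
qed

lemma rderiv_hinge_comb:
  assumes "finite T" "0 \<le> \<tau>" "\<forall>x\<ge>0. v x = hinge_comb a c T x"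
  shows "rderiv v \<tau> = sum c {\<sigma>\<in>T. \<sigma> \<le> \<tau>}"
proof -
  have "\<forall>\<^sub>F x in at_right \<tau>. x \<noteq> \<tau> \<and> v x - v \<tau> = sum c {\<sigma>\<in>T. \<sigma> \<le> \<tau>} * (x - \<tau>)"
    using increment_at_right[OF assms] by (rule eventually_mono) simp
  then show ?thesis
    unfolding rderiv_def by (simp add: Lim_difference_quotient)
qed

lemma lderiv_hinge_comb:
  assumes "finite T" "0 < \<tau>" "\<forall>x\<ge>0. v x = hinge_comb a c T x"
  shows "lderiv v \<tau> = sum c {\<sigma>\<in>T. \<sigma> < \<tau>}"
proof -
  have "\<forall>\<^sub>F x in at_left \<tau>. x \<noteq> \<tau> \<and> v x - v \<tau> = sum c {\<sigma>\<in>T. \<sigma> < \<tau>} * (x - \<tau>)"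
    using increment_at_left[OF assms] by (rule eventually_mono) simp
  then show ?thesis
    unfolding lderiv_def using assms(2) by (simp add: Lim_difference_quotient)
qed

text \<open>Monotonicity makes the right slope at \<open>\<tau>\<close> nonnegative and convexity bounds the left
  slope by the right one; the jump between them is \<open>c \<tau>\<close>.\<close>

lemma hinge_coeff_nonneg:
  assumes T: "finite T" "T \<subseteq> {0..}" and v: "\<forall>x\<ge>0. v x = hinge_comb a c T x"
    and "convex_on {0..} v" "mono_on {0..} v" and "\<tau> \<in> T"
  shows "0 \<le> c \<tau>"
proof -
  have "0 \<le> \<tau>"
    using T \<open>\<tau> \<in> T\<close> by auto
  obtain y where y: "\<tau> < y" "v y - v \<tau> = sum c {\<sigma>\<in>T. \<sigma> \<le> \<tau>} * (y - \<tau>)"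
    using eventually_happens'[OF trivial_limit_at_right_real increment_at_right[OF T(1) \<open>0 \<le> \<tau>\<close> v]]
    by blast
  have "v \<tau> \<le> v y"
    using \<open>mono_on {0..} v\<close> \<open>0 \<le> \<tau>\<close> y(1) by (auto simp: mono_on_def)
  then have "0 \<le> sum c {\<sigma>\<in>T. \<sigma> \<le> \<tau>} * (y - \<tau>)"
    using y(2) by simp
  then have right_slope: "0 \<le> sum c {\<sigma>\<in>T. \<sigma> \<le> \<tau>}"
    using y(1) by (simp add: zero_le_mult_iff)
  have split: "{\<sigma>\<in>T. \<sigma> \<le> \<tau>} = insert \<tau> {\<sigma>\<in>T. \<sigma> < \<tau>}"
    using \<open>\<tau> \<in> T\<close> by auto
  show ?thesis
  proof (cases "\<tau> = 0")
    case True
    have "{\<sigma>\<in>T. \<sigma> \<le> \<tau>} = {\<tau>}"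
      using T(2) True \<open>\<tau> \<in> T\<close> by auto
    then show ?thesis
      using right_slope by simp
  next
    case False
    then have "0 < \<tau>"
      using \<open>0 \<le> \<tau>\<close> by simp
    obtain x where x: "0 < x" "x < \<tau>" "v x - v \<tau> = sum c {\<sigma>\<in>T. \<sigma> < \<tau>} * (x - \<tau>)"
      using eventually_happens'[OF trivial_limit_at_left_real increment_at_left[OF T(1) \<open>0 < \<tau>\<close> v]]
      by blast
    have "sum c {\<sigma>\<in>T. \<sigma> < \<tau>} = (v x - v \<tau>) / (x - \<tau>)"
      using x by simp
    also have "\<dots> \<le> (v \<tau> - v y) / (\<tau> - y)"
      using convex_on_slope_le[OF \<open>convex_on {0..} v\<close>, of x y \<tau>] x y(1) by simp
    also have "\<dots> = sum c {\<sigma>\<in>T. \<sigma> \<le> \<tau>}"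
      using y by (simp add: divide_simps algebra_simps)
    finally have "sum c {\<sigma>\<in>T. \<sigma> < \<tau>} \<le> sum c {\<sigma>\<in>T. \<sigma> \<le> \<tau>}" .
    then show ?thesis
      using split T(1) by simp
  qed
qed

lemma PL_cmult:
  assumes "v \<in> PL"
  shows "(\<lambda>x. s * v x) \<in> PL"
proof -
  obtain S where S: "continuous_on {0..} v" "finite S" "affine_off S v"
    using assms unfolding PL_iff_affine_off by blast
  have "affine_off S (\<lambda>x. s * v x)"
  proof (rule affine_offI)
    fix a b :: real
    assume "0 \<le> a" "a < b" "{a<..<b} \<inter> S = {}"
    then obtain c d where "\<forall>x\<in>{a..b}. v x = c * x + d"
      using affine_offE[OF S(3)] by blast
    then have "\<forall>x\<in>{a..b}. s * v x = (s * c) * x + s * d"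
      by (simp add: algebra_simps)
    then show "\<exists>c d. \<forall>x\<in>{a..b}. s * v x = c * x + d"
      by blast
  qed
  moreover have "continuous_on {0..} (\<lambda>x. s * v x)"
    using S(1) by (intro continuous_intros)
  ultimately show ?thesis
    using S(2) unfolding PL_iff_affine_off by blast
qed

lemma breakpoints_cmult:
  assumes "v \<in> PL" "s \<noteq> 0"
  shows "breakpoints (\<lambda>x. s * v x) = breakpoints v"
proof -
  obtain T a c where T: "finite T" "T \<subseteq> {0..}" and v: "\<forall>x\<ge>0. v x = hinge_comb a c T x"
    using PL_hinge_representation[OF assms(1)] by blast
  have sv: "\<forall>x\<ge>0. s * v x = hinge_comb (s * a) (\<lambda>\<sigma>. s * c \<sigma>) T x"
    using v by (simp add: hinge_comb_cmult)
  have "rderiv (\<lambda>x. s * v x) \<tau> = s * rderiv v \<tau>" if "0 \<le> \<tau>" for \<tau>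
    using rderiv_hinge_comb[OF T(1) that v] rderiv_hinge_comb[OF T(1) that sv]
    by (simp add: sum_distrib_left)
  moreover have "lderiv (\<lambda>x. s * v x) \<tau> = s * lderiv v \<tau>" if "0 \<le> \<tau>" for \<tau>
  proof (cases "\<tau> = 0")
    case True
    then show ?thesis
      by (simp add: lderiv_def)
  next
    case False
    then have "0 < \<tau>"
      using that by simp
    then show ?thesis
      using lderiv_hinge_comb[OF T(1) _ v] lderiv_hinge_comb[OF T(1) _ sv]
      by (simp add: sum_distrib_left)
  qed
  ultimately have "lderiv (\<lambda>x. s * v x) \<tau> \<noteq> rderiv (\<lambda>x. s * v x) \<tau> \<longleftrightarrow> lderiv v \<tau> \<noteq> rderiv v \<tau>"
    if "0 \<le> \<tau>" for \<tau>
    using assms(2) that by simp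
  then show ?thesis
    unfolding breakpoints_def by blast
qed

lemma Theta_cmult:
  assumes "\<theta> \<in> Theta" "0 \<le> s"
  shows "(\<lambda>x. s * \<theta> x) \<in> Theta"
proof -
  have "convex_on {0..} \<theta>" "mono_on {0..} \<theta>"
    using assms(1) unfolding Theta_def by auto
  then have "convex_on {0..} (\<lambda>x. s * \<theta> x)" "mono_on {0..} (\<lambda>x. s * \<theta> x)"
    using assms(2) by (auto intro: convex_on_cmul mult_left_mono simp: mono_on_def)
  then show ?thesis
    unfolding Theta_def by simp
qed

lemma Theta_PL_on_cmult:
  assumes "\<theta> \<in> Theta \<inter> PL_on S" "0 < s"
  shows "(\<lambda>x. s * \<theta> x) \<in> Theta \<inter> PL_on S"
proof -
  have "\<theta> \<in> Theta" "\<theta> \<in> PL" "breakpoints \<theta> \<subseteq> S"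
    using assms(1) unfolding PL_on_def by auto
  then show ?thesis
    using Theta_cmult[of \<theta> s] PL_cmult[of \<theta> s] breakpoints_cmult[of \<theta> s] assms(2)
    unfolding PL_on_def by simp
qed

definition emp_mean :: "real list \<Rightarrow> (real \<Rightarrow> real) \<Rightarrow> real" where
  "emp_mean xs g = sum_list (map g xs) / real (length xs)"

lemma LL_eq: "LL f xs g = ereal (emp_mean xs g) - enn2ereal (expint f g) + 1"
  unfolding LL_def emp_mean_def ..

lemma LL_eq_emp_mean: "expint f g = 1 \<Longrightarrow> LL f xs g = ereal (emp_mean xs g)"
  by (simp add: LL_eq one_ennreal.rep_eq one_ereal_def)

lemma emp_mean_cong: "(\<And>x. x \<in> set xs \<Longrightarrow> g x = h x) \<Longrightarrow> emp_mean xs g = emp_mean xs h"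
  unfolding emp_mean_def by (metis map_cong)

lemma emp_mean_add: "emp_mean xs (\<lambda>x. g x + h x) = emp_mean xs g + emp_mean xs h"
  unfolding emp_mean_def by (simp add: sum_list_addf add_divide_distrib)

lemma emp_mean_cmult: "emp_mean xs (\<lambda>x. k * g x) = k * emp_mean xs g"
  unfolding emp_mean_def by (simp add: sum_list_const_mult)

lemma emp_mean_const: "xs \<noteq> [] \<Longrightarrow> emp_mean xs (\<lambda>x. k) = k"
  unfolding emp_mean_def by (simp add: sum_list_triv)

lemma emp_mean_sum: "emp_mean xs (\<lambda>x. \<Sum>\<sigma>\<in>T. g \<sigma> x) = (\<Sum>\<sigma>\<in>T. emp_mean xs (g \<sigma>))"
proof -
  have "sum_list (map (\<lambda>x. \<Sum>\<sigma>\<in>T. g \<sigma> x) xs) = (\<Sum>\<sigma>\<in>T. sum_list (map (g \<sigma>) xs))"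
    by (induction xs) (simp_all add: sum.distrib)
  then show ?thesis
    unfolding emp_mean_def by (simp add: sum_divide_distrib)
qed

lemma emp_mean_hinge_comb:
  "xs \<noteq> [] \<Longrightarrow> emp_mean xs (hinge_comb a c T) = a + (\<Sum>\<sigma>\<in>T. c \<sigma> * emp_mean xs (Vtau \<sigma>))"
  unfolding hinge_comb_def[abs_def] by (simp add: emp_mean_add emp_mean_const emp_mean_sum emp_mean_cmult)

lemma emp_mean_Vtau_beyond:
  assumes "\<forall>x\<in>set xs. x \<le> \<sigma>"
  shows "emp_mean xs (Vtau \<sigma>) = 0"
proof -
  have "emp_mean xs (Vtau \<sigma>) = emp_mean xs (\<lambda>x. 0 * x)"
    using assms by (intro emp_mean_cong) (simp add: Vtau_def)
  then show ?thesis
    using emp_mean_cmult[of xs 0 "\<lambda>x. x"] by simp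
qed

lemma expint_cong: "(\<And>x. 0 \<le> x \<Longrightarrow> g x = h x) \<Longrightarrow> expint f g = expint f h"
  unfolding expint_def by (intro nn_integral_cong) (auto simp: indicator_def)

lemma emp_mean_cong_nonneg:
  assumes "\<forall>x\<in>set xs. 0 \<le> x" "\<forall>x\<ge>0. g x = h x"
  shows "emp_mean xs g = emp_mean xs h"
  using assms by (intro emp_mean_cong) auto

lemma LL_cong:
  assumes "\<forall>x\<in>set xs. 0 \<le> x" "\<forall>x\<ge>0. g x = h x"
  shows "LL f xs g = LL f xs h"
proof -
  have "expint f g = expint f h"
    using assms(2) by (intro expint_cong) auto
  then show ?thesis
    using emp_mean_cong_nonneg[OF assms] by (simp add: LL_eq)
qed

lemma DL_cong:
  assumes "\<forall>x\<in>set xs. 0 \<le> x" "\<forall>x\<ge>0. g x = h x"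
  shows "DL f xs g v = DL f xs h v"
proof -
  have "LL f xs (\<lambda>x. g x + t * v x) = LL f xs (\<lambda>x. h x + t * v x)" for t
    using assms by (intro LL_cong) auto
  then show ?thesis
    unfolding DL_def using LL_cong[OF assms] by simp
qed

lemma LL_cmult_le_if_local_optimum:
  assumes "\<theta> \<in> Theta \<inter> PL_on S" "\<forall>v\<in>Theta \<inter> PL_on S. LL f xs v \<le> LL f xs \<theta>" "0 < s"
  shows "LL f xs (\<lambda>x. s * \<theta> x) \<le> LL f xs \<theta>"
  using assms Theta_PL_on_cmult by blast

lemma Theta1_PL_hinge_representation:
  assumes "\<theta> \<in> Theta1 f" "\<theta> \<in> PL"
  obtains T a c where "finite T" "T \<subseteq> {0..}" "\<forall>\<sigma>\<in>T. 0 \<le> c \<sigma>"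
    "\<forall>x\<ge>0. \<theta> x = hinge_comb a c T x" "expint f (hinge_comb a c T) = 1"
proof -
  have "convex_on {0..} \<theta>" "mono_on {0..} \<theta>" "expint f \<theta> = 1"
    using assms(1) unfolding Theta1_def Theta_def by auto
  obtain T a c where T: "finite T" "T \<subseteq> {0..}" and \<theta>: "\<forall>x\<ge>0. \<theta> x = hinge_comb a c T x"
    by (rule PL_hinge_representation[OF assms(2)])
  have nonneg: "\<forall>\<sigma>\<in>T. 0 \<le> c \<sigma>"
    using hinge_coeff_nonneg[OF T \<theta> \<open>convex_on {0..} \<theta>\<close> \<open>mono_on {0..} \<theta>\<close>] by blast
  have "expint f (hinge_comb a c T) = 1"
    using \<theta> \<open>expint f \<theta> = 1\<close> expint_cong[of \<theta> "hinge_comb a c T" f] by simp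
  then show ?thesis
    by (rule that[OF T nonneg \<theta>])
qed

definition M_density :: "(real \<Rightarrow> real) \<Rightarrow> real \<Rightarrow> real" where
  "M_density f x = indicator {0..} x * f x"

lemma standing_assmsD:
  assumes "standing_assms f \<beta>"
  shows "\<And>x. 0 \<le> x \<Longrightarrow> 0 \<le> f x" "continuous_on {0..} f"
    "\<And>l. expint f (\<lambda>x. l * x) < \<infinity> \<longleftrightarrow> l < \<beta>"
    "\<And>l. l < \<beta> \<Longrightarrow> (\<integral>\<^sup>+ x\<in>{0..}. ennreal (x\<^sup>2 * exp (l * x) * f x) \<partial>lborel) < \<infinity>"
  using assms unfolding standing_assms_def by auto

lemma M_density_measurable:
  assumes "standing_assms f \<beta>"
  shows "M_density f \<in> borel_measurable borel"
proof -
  have "(\<lambda>x. indicator {0..} x *\<^sub>R f x) \<in> borel_measurable borel"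
    using standing_assmsD(2)[OF assms] by (intro borel_measurable_continuous_on_indicator) auto
  then show ?thesis
    unfolding M_density_def[abs_def] by simp
qed

lemma M_density_nonneg: "standing_assms f \<beta> \<Longrightarrow> 0 \<le> M_density f x"
  using standing_assmsD(1) by (simp add: M_density_def indicator_def)

lemma expint_M_density: "expint f g = (\<integral>\<^sup>+x. ennreal (exp (g x) * M_density f x) \<partial>lborel)"
  unfolding expint_def M_density_def by (intro nn_integral_cong) (auto simp: indicator_def)

lemma integrable_moment:
  assumes A: "standing_assms f \<beta>" and "l < \<beta>"
  shows "integrable lborel (\<lambda>x. (1 + x\<^sup>2) * exp (l * x) * M_density f x)"
proof -
  note [measurable] = M_density_measurable[OF A]
  have "(\<integral>\<^sup>+x. ennreal (exp (l * x) * M_density f x) \<partial>lborel) < \<infinity>"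
    using standing_assmsD(3)[OF A] \<open>l < \<beta>\<close> by (simp add: expint_M_density)
  moreover have "(\<integral>\<^sup>+x. ennreal (x\<^sup>2 * exp (l * x) * M_density f x) \<partial>lborel) < \<infinity>"
  proof -
    have "(\<integral>\<^sup>+x. ennreal (x\<^sup>2 * exp (l * x) * M_density f x) \<partial>lborel)
        = (\<integral>\<^sup>+ x\<in>{0..}. ennreal (x\<^sup>2 * exp (l * x) * f x) \<partial>lborel)"
      unfolding M_density_def by (intro nn_integral_cong) (auto simp: indicator_def)
    then show ?thesis
      using standing_assmsD(4)[OF A \<open>l < \<beta>\<close>] by simp
  qed
  moreover have "(\<integral>\<^sup>+x. ennreal ((1 + x\<^sup>2) * exp (l * x) * M_density f x) \<partial>lborel)
      = (\<integral>\<^sup>+x. ennreal (exp (l * x) * M_density f x) \<partial>lborel)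
        + (\<integral>\<^sup>+x. ennreal (x\<^sup>2 * exp (l * x) * M_density f x) \<partial>lborel)"
    using M_density_nonneg[OF A]
    by (subst nn_integral_add[symmetric]) (auto intro!: nn_integral_cong simp: ennreal_plus[symmetric] algebra_simps simp del: ennreal_plus)
  ultimately show ?thesis
    using M_density_nonneg[OF A] by (intro integrableI_nonneg) (auto simp: ennreal_add_less_top)
qed

lemma slope_less_beta:
  assumes A: "standing_assms f \<beta>" and lower: "\<And>x. 0 \<le> x \<Longrightarrow> b + D * x \<le> g x"
    and finite: "expint f g < \<infinity>"
  shows "D < \<beta>"
proof -
  note [measurable] = M_density_measurable[OF A]
  have "ennreal (exp b) * expint f (\<lambda>x. D * x) = expint f (\<lambda>x. b + D * x)"
    using M_density_nonneg[OF A] unfolding expint_M_density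
    by (subst nn_integral_cmult[symmetric]) (auto intro!: nn_integral_cong simp: ennreal_mult[symmetric] exp_add mult.assoc)
  also have "\<dots> \<le> expint f g"
    unfolding expint_def
    using standing_assmsD(1)[OF A] lower
    by (intro nn_integral_mono) (auto simp: indicator_def intro!: ennreal_leI mult_right_mono)
  finally have "ennreal (exp b) * expint f (\<lambda>x. D * x) < \<infinity>"
    using finite by (simp add: order_le_less_trans)
  then have "expint f (\<lambda>x. D * x) < \<infinity>"
    by (auto simp: ennreal_mult_less_top)
  then show ?thesis
    using standing_assmsD(3)[OF A] by blast
qed

lemma abs_exp_minus_one_le: "\<bar>exp u - 1\<bar> \<le> \<bar>u\<bar> * exp \<bar>u::real\<bar>"
proof (cases "0 \<le> u")
  case True
  have "(1 - u) * exp u \<le> exp (- u) * exp u"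
    using exp_ge_add_one_self[of "- u"] by (intro mult_right_mono) auto
  then show ?thesis
    using True by (simp add: exp_minus algebra_simps)
next
  case False
  then have "\<bar>exp u - 1\<bar> = 1 - exp u"
    by simp
  also have "\<dots> \<le> \<bar>u\<bar>"
    using exp_ge_add_one_self[of u] False by linarith
  also have "\<dots> \<le> \<bar>u\<bar> * exp \<bar>u\<bar>"
    by (simp add: mult_le_cancel_left1)
  finally show ?thesis .
qed

lemma exp_difference_quotient_bound:
  fixes t t1 y :: real
  assumes "0 < t" "t \<le> t1"
  shows "\<bar>(exp (t * y) - 1) / t\<bar> \<le> \<bar>y\<bar> * exp (t1 * \<bar>y\<bar>)"
proof -
  have "\<bar>t * y\<bar> = t * \<bar>y\<bar>"
    using assms(1) by (simp add: abs_mult)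
  then have "\<bar>exp (t * y) - 1\<bar> \<le> t * \<bar>y\<bar> * exp (t * \<bar>y\<bar>)"
    using abs_exp_minus_one_le[of "t * y"] by simp
  also have "\<dots> \<le> t * \<bar>y\<bar> * exp (t1 * \<bar>y\<bar>)"
    using assms by (intro mult_left_mono) (auto intro!: mult_right_mono)
  finally show ?thesis
    using assms(1) by (simp add: divide_le_eq mult.commute mult.left_commute)
qed

lemma tendsto_exp_difference_quotient: "((\<lambda>t. (exp (t * y) - 1) / t) \<longlongrightarrow> y) (at_right (0::real))"
proof -
  have "((\<lambda>t. exp (t * y)) has_field_derivative y) (at_right 0)"
    by (auto intro!: derivative_eq_intros)
  then show ?thesis
    by (simp add: has_field_derivative_iff)
qed

lemma integral_dominated_convergence_at_right:
  fixes s :: "real \<Rightarrow> 'a \<Rightarrow> real"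
  assumes "f \<in> borel_measurable M" "\<And>t. s t \<in> borel_measurable M" "integrable M w"
    and lim: "AE x in M. ((\<lambda>t. s t x) \<longlongrightarrow> f x) (at_right 0)"
    and bound: "\<forall>\<^sub>F t in at_right 0. AE x in M. norm (s t x) \<le> w x"
  shows "((\<lambda>t. integral\<^sup>L M (s t)) \<longlongrightarrow> integral\<^sup>L M f) (at_right 0)"
  unfolding filterlim_at_right_to_top
proof (rule integral_dominated_convergence_at_top[OF assms(1-3)])
  show "AE x in M. ((\<lambda>u. s (inverse u) x) \<longlongrightarrow> f x) at_top"
    using lim by eventually_elim (simp add: filterlim_at_right_to_top)
  show "\<forall>\<^sub>F u in at_top. AE x in M. norm (s (inverse u) x) \<le> w x"
    using bound by (simp add: eventually_at_right_to_top)
qed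

lemma exp_mult_abs_le:
  fixes y :: real
  assumes "\<bar>y\<bar> \<le> \<alpha> * (1 + x)" "0 \<le> t"
  shows "exp (t * \<bar>y\<bar>) \<le> exp (t * \<alpha>) * exp (t * \<alpha> * x)"
proof -
  have "t * \<bar>y\<bar> \<le> t * (\<alpha> * (1 + x))"
    using assms by (intro mult_left_mono) auto
  then show ?thesis
    by (simp add: exp_add[symmetric] algebra_simps)
qed

lemma one_plus_le_two_one_plus_sq: "1 + x \<le> 2 * (1 + x\<^sup>2)" for x :: real
  using zero_le_power2[of "x - 1/4"] by (simp add: power2_eq_square algebra_simps)

section \<open>The exponentially tilted measure\<close>

locale exp_tilt =
  fixes f :: "real \<Rightarrow> real" and \<beta> :: real and \<theta> :: "real \<Rightarrow> real" and a D :: real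
  assumes standing: "standing_assms f \<beta>"
    and \<theta>_measurable [measurable]: "\<theta> \<in> borel_measurable borel"
    and expint_\<theta>: "expint f \<theta> = 1"
    and \<theta>_bounds: "\<And>x. 0 \<le> x \<Longrightarrow> a \<le> \<theta> x \<and> \<theta> x \<le> a + D * x"
    and slope_less: "D < \<beta>"
begin

lemmas [measurable] = M_density_measurable[OF standing]

definition tilted :: "real measure" where
  "tilted = density lborel (\<lambda>x. ennreal (exp (\<theta> x) * M_density f x))"

lemma sets_tilted [measurable_cong, simp]: "sets tilted = sets borel"
  by (simp add: tilted_def)

lemma AE_tilted_nonneg: "AE x in tilted. 0 \<le> x"
  unfolding tilted_def by (subst AE_density) (measurable, auto simp: M_density_def indicator_def)

lemma nn_integral_tilted_exp:
  assumes [measurable]: "h \<in> borel_measurable borel"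
  shows "(\<integral>\<^sup>+x. ennreal (exp (h x)) \<partial>tilted) = expint f (\<lambda>x. \<theta> x + h x)"
  unfolding tilted_def expint_M_density using M_density_nonneg[OF standing]
  by (subst nn_integral_density) (auto intro!: nn_integral_cong simp: ennreal_mult[symmetric] exp_add)

lemma measure_tilted_space [simp]: "measure tilted (space tilted) = 1"
proof -
  have "emeasure tilted (space tilted) = 1"
    using nn_integral_tilted_exp[of "\<lambda>x. 0"] expint_\<theta> by simp
  then show ?thesis
    by (simp add: measure_def)
qed

lemma integrable_tilted:
  assumes [measurable]: "g \<in> borel_measurable borel" and "D + l < \<beta>"
    and bound: "\<And>x. 0 \<le> x \<Longrightarrow> \<bar>g x\<bar> \<le> \<alpha> * (1 + x) * exp (l * x)"
  shows "integrable tilted g"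
proof -
  have "0 \<le> \<alpha>"
    using bound[of 0] by simp
  define w where "w x = 2 * \<alpha> * exp a * ((1 + x\<^sup>2) * exp ((D + l) * x) * M_density f x)" for x
  have "integrable lborel w"
    unfolding w_def using integrable_moment[OF standing \<open>D + l < \<beta>\<close>] by simp
  then have "integrable lborel (\<lambda>x. (exp (\<theta> x) * M_density f x) *\<^sub>R g x)"
  proof (rule Bochner_Integration.integrable_bound)
    show "AE x in lborel. norm ((exp (\<theta> x) * M_density f x) *\<^sub>R g x) \<le> norm (w x)"
    proof (rule AE_I2)
      fix x :: real
      show "norm ((exp (\<theta> x) * M_density f x) *\<^sub>R g x) \<le> norm (w x)"
      proof (cases "0 \<le> x")
        case False
        then show ?thesis
          by (simp add: M_density_def)
      next
        case True
        have "exp (\<theta> x) * \<bar>g x\<bar> \<le> (exp a * exp (D * x)) * (\<alpha> * (1 + x) * exp (l * x))"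
          using \<theta>_bounds[OF True] bound[OF True]
          by (intro mult_mono) (auto simp: exp_add[symmetric])
        also have "\<dots> = \<alpha> * exp a * exp ((D + l) * x) * (1 + x)"
          by (simp add: exp_add[symmetric] algebra_simps)
        also have "\<dots> \<le> \<alpha> * exp a * exp ((D + l) * x) * (2 * (1 + x\<^sup>2))"
          using \<open>0 \<le> \<alpha>\<close> one_plus_le_two_one_plus_sq by (intro mult_left_mono) auto
        finally have "exp (\<theta> x) * \<bar>g x\<bar> * M_density f x \<le>
            \<alpha> * exp a * exp ((D + l) * x) * (2 * (1 + x\<^sup>2)) * M_density f x"
          using M_density_nonneg[OF standing] by (intro mult_right_mono) auto
        then show ?thesis
          using M_density_nonneg[OF standing, of x] \<open>0 \<le> \<alpha>\<close>
          by (simp add: w_def abs_mult algebra_simps)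
      qed
    qed
  qed simp
  then show ?thesis
    unfolding tilted_def using M_density_nonneg[OF standing]
    by (subst integrable_density) auto
qed

lemma integrable_tilted_linear:
  assumes "g \<in> borel_measurable borel" "\<And>x. 0 \<le> x \<Longrightarrow> \<bar>g x\<bar> \<le> \<alpha> * (1 + x)"
  shows "integrable tilted g"
  using assms slope_less by (intro integrable_tilted[where l = 0 and \<alpha> = \<alpha>]) auto

lemma integrable_tilted_const [simp]: "integrable tilted (\<lambda>x. k :: real)"
  by (rule integrable_tilted_linear[where \<alpha> = "\<bar>k\<bar>"]) (auto simp: algebra_simps)

lemma \<theta>_linear_growth: "\<exists>\<alpha>. \<forall>x\<ge>0. \<bar>\<theta> x\<bar> \<le> \<alpha> * (1 + x)"
proof (intro exI allI impI)
  fix x :: real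
  assume "0 \<le> x"
  moreover have "D * x \<le> \<bar>D\<bar> * x" "0 \<le> \<bar>D\<bar> * x"
    using \<open>0 \<le> x\<close> by (auto intro: mult_right_mono)
  ultimately have "\<bar>\<theta> x\<bar> \<le> \<bar>a\<bar> + \<bar>D\<bar> * x"
    using \<theta>_bounds[of x] abs_ge_self[of a] abs_ge_minus_self[of a] unfolding abs_le_iff by linarith
  also have "\<dots> \<le> (\<bar>a\<bar> + \<bar>D\<bar>) * (1 + x)"
    using \<open>0 \<le> x\<close> by (simp add: algebra_simps)
  finally show "\<bar>\<theta> x\<bar> \<le> (\<bar>a\<bar> + \<bar>D\<bar>) * (1 + x)" .
qed

lemma integrable_tilted_\<theta>: "integrable tilted \<theta>"
  using \<theta>_linear_growth integrable_tilted_linear[OF \<theta>_measurable] by blast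

lemma expint_shift:
  assumes [measurable]: "h \<in> borel_measurable borel" and "integrable tilted (\<lambda>x. exp (h x))"
  shows "expint f (\<lambda>x. \<theta> x + h x) = ennreal (\<integral>x. exp (h x) \<partial>tilted)"
  using nn_integral_tilted_exp[of h] nn_integral_eq_integral[OF assms(2)] by simp

lemma LL_shift:
  assumes [measurable]: "h \<in> borel_measurable borel" and "integrable tilted (\<lambda>x. exp (t * h x))"
  shows "LL f xs (\<lambda>x. \<theta> x + t * h x)
    = ereal (emp_mean xs \<theta> + t * emp_mean xs h - (\<integral>x. exp (t * h x) \<partial>tilted) + 1)"
proof -
  have "expint f (\<lambda>x. \<theta> x + t * h x) = ennreal (\<integral>x. exp (t * h x) \<partial>tilted)"
    using assms by (intro expint_shift) auto
  moreover have "0 \<le> (\<integral>x. exp (t * h x) \<partial>tilted)"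
    by simp
  ultimately show ?thesis
    by (simp add: LL_eq emp_mean_add emp_mean_cmult)
qed

lemma exp_moment_slack:
  assumes "0 \<le> \<alpha>"
  obtains t1 where "0 < t1" "D + t1 * \<alpha> < \<beta>"
proof
  define t1 where "t1 = (\<beta> - D) / (2 * (\<alpha> + 1))"
  show "0 < t1"
    using slope_less assms by (simp add: t1_def)
  have "t1 * \<alpha> \<le> t1 * (\<alpha> + 1)"
    using \<open>0 < t1\<close> by simp
  also have "\<dots> = (\<beta> - D) / 2"
    using assms by (simp add: t1_def field_simps)
  also have "\<dots> < \<beta> - D"
    using slope_less by simp
  finally show "D + t1 * \<alpha> < \<beta>"
    by simp
qed

lemma integrable_tilted_exp_mult:
  assumes [measurable]: "h \<in> borel_measurable borel"
    and linear_growth: "\<And>x. 0 \<le> x \<Longrightarrow> \<bar>h x\<bar> \<le> \<alpha> * (1 + x)"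
    and slack: "D + t1 * \<alpha> < \<beta>" and t: "0 < t" "t \<le> t1"
  shows "integrable tilted (\<lambda>x. exp (t * h x))"
proof (rule integrable_tilted[OF _ slack])
  fix x :: real
  assume "0 \<le> x"
  have "t * h x \<le> t * \<bar>h x\<bar>"
    using t by (intro mult_left_mono) auto
  also have "\<dots> \<le> t1 * \<bar>h x\<bar>"
    using t by (intro mult_right_mono) auto
  finally have "exp (t * h x) \<le> exp (t1 * \<bar>h x\<bar>)"
    by simp
  also have "\<dots> \<le> exp (t1 * \<alpha>) * 1 * exp (t1 * \<alpha> * x)"
    using exp_mult_abs_le[OF linear_growth[OF \<open>0 \<le> x\<close>]] t by simp
  also have "\<dots> \<le> exp (t1 * \<alpha>) * (1 + x) * exp (t1 * \<alpha> * x)"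
    using \<open>0 \<le> x\<close> by (intro mult_right_mono mult_left_mono) auto
  finally show "\<bar>exp (t * h x)\<bar> \<le> exp (t1 * \<alpha>) * (1 + x) * exp (t1 * \<alpha> * x)"
    by simp
qed simp

lemma tendsto_integral_exp_difference_quotient:
  assumes [measurable]: "h \<in> borel_measurable borel"
    and linear_growth: "\<And>x. 0 \<le> x \<Longrightarrow> \<bar>h x\<bar> \<le> \<alpha> * (1 + x)"
  shows "\<forall>\<^sub>F t in at_right 0. integrable tilted (\<lambda>x. exp (t * h x))"
    and "((\<lambda>t. ((\<integral>x. exp (t * h x) \<partial>tilted) - 1) / t) \<longlongrightarrow> (\<integral>x. h x \<partial>tilted)) (at_right 0)"
proof -
  have "0 \<le> \<alpha>"
    using linear_growth[of 0] by simp
  then obtain t1 where "0 < t1" and slack: "D + t1 * \<alpha> < \<beta>"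
    by (rule exp_moment_slack)
  have small: "\<forall>\<^sub>F t in at_right 0. 0 < t \<and> t \<le> t1"
    using eventually_at_right_real[OF \<open>0 < t1\<close>] by (rule eventually_mono) simp
  note integrable_exp = integrable_tilted_exp_mult[OF assms slack]
  from small show "\<forall>\<^sub>F t in at_right 0. integrable tilted (\<lambda>x. exp (t * h x))"
    by (rule eventually_mono) (use integrable_exp in blast)
  define w where "w x = \<alpha> * exp (t1 * \<alpha>) * (1 + x) * exp (t1 * \<alpha> * x)" for x
  have [measurable]: "w \<in> borel_measurable borel"
    unfolding w_def[abs_def] by measurable
  have "((\<lambda>t. \<integral>x. (exp (t * h x) - 1) / t \<partial>tilted) \<longlongrightarrow> (\<integral>x. h x \<partial>tilted)) (at_right 0)"
  proof (rule integral_dominated_convergence_at_right[where w = w])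
    show "integrable tilted w"
      using \<open>0 \<le> \<alpha>\<close> by (intro integrable_tilted[OF _ slack]) (auto simp: w_def)
    show "AE x in tilted. ((\<lambda>t. (exp (t * h x) - 1) / t) \<longlongrightarrow> h x) (at_right 0)"
      by (simp add: tendsto_exp_difference_quotient)
    show "\<forall>\<^sub>F t in at_right 0. AE x in tilted. norm ((exp (t * h x) - 1) / t) \<le> w x"
      using small
    proof (rule eventually_mono)
      fix t :: real
      assume t: "0 < t \<and> t \<le> t1"
      show "AE x in tilted. norm ((exp (t * h x) - 1) / t) \<le> w x"
        using AE_tilted_nonneg
      proof (rule AE_mp[OF _ AE_I2], intro impI)
        fix x :: real
        assume "0 \<le> x"
        have "norm ((exp (t * h x) - 1) / t) \<le> \<bar>h x\<bar> * exp (t1 * \<bar>h x\<bar>)"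
          using exp_difference_quotient_bound t by simp
        also have "\<dots> \<le> (\<alpha> * (1 + x)) * (exp (t1 * \<alpha>) * exp (t1 * \<alpha> * x))"
          using linear_growth[OF \<open>0 \<le> x\<close>] exp_mult_abs_le[OF linear_growth[OF \<open>0 \<le> x\<close>]]
            \<open>0 < t1\<close> by (intro mult_mono) auto
        finally show "norm ((exp (t * h x) - 1) / t) \<le> w x"
          by (simp add: w_def algebra_simps)
      qed
    qed
  qed auto
  moreover have "\<forall>\<^sub>F t in at_right 0.
      (\<integral>x. (exp (t * h x) - 1) / t \<partial>tilted) = ((\<integral>x. exp (t * h x) \<partial>tilted) - 1) / t"
    using small by (rule eventually_mono) (simp add: integrable_exp)
  ultimately show "((\<lambda>t. ((\<integral>x. exp (t * h x) \<partial>tilted) - 1) / t) \<longlongrightarrow> (\<integral>x. h x \<partial>tilted)) (at_right 0)"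
    by (rule Lim_transform_eventually)
qed

lemma DL_tilted:
  assumes h_measurable [measurable]: "h \<in> borel_measurable borel"
    and linear_growth: "\<And>x. 0 \<le> x \<Longrightarrow> \<bar>h x\<bar> \<le> \<alpha> * (1 + x)"
  shows "DL f xs \<theta> h = ereal (emp_mean xs h - (\<integral>x. h x \<partial>tilted))"
proof -
  note limit = tendsto_integral_exp_difference_quotient[OF h_measurable linear_growth]
  have "\<forall>\<^sub>F t in at_right 0. ereal (emp_mean xs h - ((\<integral>x. exp (t * h x) \<partial>tilted) - 1) / t)
      = (LL f xs (\<lambda>x. \<theta> x + t * h x) - LL f xs \<theta>) / ereal t"
    using eventually_conj[OF limit(1) eventually_at_right_less]
  proof (rule eventually_mono)
    fix t :: real
    assume "integrable tilted (\<lambda>x. exp (t * h x)) \<and> 0 < t"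
    then show "ereal (emp_mean xs h - ((\<integral>x. exp (t * h x) \<partial>tilted) - 1) / t)
      = (LL f xs (\<lambda>x. \<theta> x + t * h x) - LL f xs \<theta>) / ereal t"
      by (simp add: LL_shift LL_eq_emp_mean[OF expint_\<theta>] field_simps)
  qed
  moreover have "((\<lambda>t. ereal (emp_mean xs h - ((\<integral>x. exp (t * h x) \<partial>tilted) - 1) / t))
      \<longlongrightarrow> ereal (emp_mean xs h - (\<integral>x. h x \<partial>tilted))) (at_right 0)"
    by (intro tendsto_ereal tendsto_diff tendsto_const limit(2))
  ultimately have "((\<lambda>t. (LL f xs (\<lambda>x. \<theta> x + t * h x) - LL f xs \<theta>) / ereal t)
      \<longlongrightarrow> ereal (emp_mean xs h - (\<integral>x. h x \<partial>tilted))) (at_right 0)"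
    by (rule Lim_transform_eventually[rotated])
  then show ?thesis
    unfolding DL_def by (intro tendsto_Lim) auto
qed

lemma integral_le_emp_mean_if_scaling_optimal:
  assumes optimal: "\<And>s. 0 < s \<Longrightarrow> s < 1 \<Longrightarrow> LL f xs (\<lambda>x. s * \<theta> x) \<le> LL f xs \<theta>"
  shows "(\<integral>x. \<theta> x \<partial>tilted) \<le> emp_mean xs \<theta>"
proof -
  obtain \<alpha> where linear_growth: "\<And>x. 0 \<le> x \<Longrightarrow> \<bar>- \<theta> x\<bar> \<le> \<alpha> * (1 + x)"
    using \<theta>_linear_growth by auto
  have "(\<lambda>x. - \<theta> x) \<in> borel_measurable borel"
    by measurable
  note limit = tendsto_integral_exp_difference_quotient[OF this linear_growth]
  \<comment> \<open>\<open>(1 - t) \<theta> = \<theta> + t (-\<theta>)\<close>, so the difference quotients in direction \<open>-\<theta>\<close> are \<open>\<le> 0\<close>.\<close>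
  have "\<forall>\<^sub>F t in at_right 0. - emp_mean xs \<theta> \<le> ((\<integral>x. exp (t * - \<theta> x) \<partial>tilted) - 1) / t"
    using eventually_conj[OF limit(1) eventually_at_right_real[OF zero_less_one]]
  proof (rule eventually_mono)
    fix t :: real
    assume small: "integrable tilted (\<lambda>x. exp (t * - \<theta> x)) \<and> t \<in> {0<..<1}"
    have "(\<lambda>x. (1 - t) * \<theta> x) = (\<lambda>x. \<theta> x + t * - \<theta> x)"
      by (simp add: algebra_simps)
    then have "LL f xs (\<lambda>x. \<theta> x + t * - \<theta> x) \<le> LL f xs \<theta>"
      using optimal[of "1 - t"] small by simp
    then have "emp_mean xs \<theta> - t * emp_mean xs \<theta> - (\<integral>x. exp (t * - \<theta> x) \<partial>tilted) + 1
        \<le> emp_mean xs \<theta>"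
      using LL_shift[of "\<lambda>x. - \<theta> x" t xs] small LL_eq_emp_mean[OF expint_\<theta>]
      by (simp add: emp_mean_cmult[of xs "-1", simplified])
    then show "- emp_mean xs \<theta> \<le> ((\<integral>x. exp (t * - \<theta> x) \<partial>tilted) - 1) / t"
      using small by (simp add: field_simps)
  qed
  from tendsto_lowerbound[OF limit(2) this]
  have "- emp_mean xs \<theta> \<le> (\<integral>x. - \<theta> x \<partial>tilted)"
    by simp
  then show ?thesis
    by simp
qed

text \<open>Integrate \<open>1 + y \<le> exp y\<close> with \<open>y = g - \<theta>\<close> against \<open>tilted\<close>.\<close>

lemma integral_le_if_expint_eq_1:
  assumes [measurable]: "g \<in> borel_measurable borel" and "integrable tilted g" and "expint f g = 1"
  shows "(\<integral>x. g x \<partial>tilted) \<le> (\<integral>x. \<theta> x \<partial>tilted)"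
proof -
  have nn: "(\<integral>\<^sup>+x. ennreal (exp (g x - \<theta> x)) \<partial>tilted) = 1"
    using nn_integral_tilted_exp[of "\<lambda>x. g x - \<theta> x"] assms(3) by simp
  then have integrable: "integrable tilted (\<lambda>x. exp (g x - \<theta> x))"
    by (intro integrableI_nonneg) auto
  have "(\<integral>x. exp (g x - \<theta> x) \<partial>tilted) = 1"
    using nn by (subst integral_eq_nn_integral) auto
  moreover have "(\<integral>x. 1 + (g x - \<theta> x) \<partial>tilted) \<le> (\<integral>x. exp (g x - \<theta> x) \<partial>tilted)"
    using assms(2) integrable_tilted_\<theta> integrable by (intro integral_mono) auto
  ultimately show ?thesis
    using assms(2) integrable_tilted_\<theta> by simp
qed

lemma integrable_tilted_Vtau: "integrable tilted (Vtau \<sigma>)"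
  using Vtau_linear_growth by (intro integrable_tilted_linear) auto

lemma DL_Vtau: "DL f xs \<theta> (Vtau \<sigma>) = ereal (emp_mean xs (Vtau \<sigma>) - (\<integral>x. Vtau \<sigma> x \<partial>tilted))"
  using Vtau_linear_growth by (intro DL_tilted) auto

lemma integrable_tilted_hinge_comb: "finite T \<Longrightarrow> integrable tilted (hinge_comb b c T)"
  using integrable_tilted_Vtau unfolding hinge_comb_def[abs_def] by simp

lemma integral_tilted_hinge_comb:
  assumes "finite T"
  shows "(\<integral>x. hinge_comb b c T x \<partial>tilted) = b + (\<Sum>\<sigma>\<in>T. c \<sigma> * (\<integral>x. Vtau \<sigma> x \<partial>tilted))"
  using assms integrable_tilted_Vtau unfolding hinge_comb_def by simp

lemma emp_mean_minus_integral_hinge_comb_le: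
  assumes "xs \<noteq> []" "\<forall>x\<in>set xs. x \<le> m" "finite T" "\<forall>\<sigma>\<in>T. 0 \<le> c \<sigma>"
    and DL_bound: "\<And>\<sigma>. \<sigma> \<in> T \<Longrightarrow> \<sigma> \<le> m \<Longrightarrow> DL f xs \<theta> (Vtau \<sigma>) \<le> ereal \<epsilon>"
  shows "emp_mean xs (hinge_comb b c T) - (\<integral>x. hinge_comb b c T x \<partial>tilted)
    \<le> sum c {\<sigma>\<in>T. \<sigma> \<le> m} * \<epsilon>"
proof -
  define gap where "gap \<sigma> = emp_mean xs (Vtau \<sigma>) - (\<integral>x. Vtau \<sigma> x \<partial>tilted)" for \<sigma>
  have "c \<sigma> * gap \<sigma> \<le> (if \<sigma> \<le> m then c \<sigma> else 0) * \<epsilon>" if "\<sigma> \<in> T" for \<sigma>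
  proof (cases "\<sigma> \<le> m")
    case True
    then have "gap \<sigma> \<le> \<epsilon>"
      using DL_bound[OF that] DL_Vtau unfolding gap_def by simp
    then show ?thesis
      using True assms(4) that by (simp add: mult_left_mono)
  next
    case False
    then have "emp_mean xs (Vtau \<sigma>) = 0"
      using assms(2) by (intro emp_mean_Vtau_beyond) force
    moreover have "0 \<le> (\<integral>x. Vtau \<sigma> x \<partial>tilted)"
      by (simp add: Vtau_def)
    ultimately show ?thesis
      using False assms(4) that by (simp add: gap_def mult_nonneg_nonpos)
  qed
  then have "(\<Sum>\<sigma>\<in>T. c \<sigma> * gap \<sigma>) \<le> (\<Sum>\<sigma>\<in>T. (if \<sigma> \<le> m then c \<sigma> else 0) * \<epsilon>)"
    by (rule sum_mono)
  also have "\<dots> = sum c {\<sigma>\<in>T. \<sigma> \<le> m} * \<epsilon>"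
    using assms(3) by (simp add: sum.inter_filter sum_distrib_right)
  finally show ?thesis
    using assms(1,3)
    by (simp add: emp_mean_hinge_comb integral_tilted_hinge_comb gap_def sum_subtractf right_diff_distrib)
qed

theorem emp_mean_gain_le:
  assumes "xs \<noteq> []" "\<forall>x\<in>set xs. x \<le> m"
    and scaling: "\<And>s. 0 < s \<Longrightarrow> s < 1 \<Longrightarrow> LL f xs (\<lambda>x. s * \<theta> x) \<le> LL f xs \<theta>"
    and T: "finite T" "\<forall>\<sigma>\<in>T. 0 \<le> c \<sigma>" and "expint f (hinge_comb b c T) = 1"
    and DL_bound: "\<And>\<sigma>. \<sigma> \<in> T \<Longrightarrow> \<sigma> \<le> m \<Longrightarrow> DL f xs \<theta> (Vtau \<sigma>) \<le> ereal \<epsilon>"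
  shows "emp_mean xs (hinge_comb b c T) - emp_mean xs \<theta> \<le> sum c {\<sigma>\<in>T. \<sigma> \<le> m} * \<epsilon>"
proof -
  have "(\<integral>x. hinge_comb b c T x \<partial>tilted) \<le> (\<integral>x. \<theta> x \<partial>tilted)"
    using integrable_tilted_hinge_comb[OF T(1)] \<open>expint f (hinge_comb b c T) = 1\<close>
    by (intro integral_le_if_expint_eq_1) auto
  also have "\<dots> \<le> emp_mean xs \<theta>"
    by (rule integral_le_emp_mean_if_scaling_optimal[OF scaling])
  moreover have "emp_mean xs (hinge_comb b c T) - (\<integral>x. hinge_comb b c T x \<partial>tilted)
      \<le> sum c {\<sigma>\<in>T. \<sigma> \<le> m} * \<epsilon>"
    by (rule emp_mean_minus_integral_hinge_comb_le[OF assms(1,2) T DL_bound])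
  ultimately show ?thesis
    by linarith
qed

end

lemma exp_tilt_hinge_comb:
  assumes A: "standing_assms f \<beta>" and T: "finite T" "T \<subseteq> {0..}" "\<forall>\<sigma>\<in>T. 0 \<le> c \<sigma>"
    and norm: "expint f (hinge_comb a c T) = 1"
  shows "exp_tilt f \<beta> (hinge_comb a c T) a (sum c T)"
proof
  show "standing_assms f \<beta>"
    by (rule A)
  show "hinge_comb a c T \<in> borel_measurable borel"
    by measurable
  show "expint f (hinge_comb a c T) = 1"
    by (rule norm)
  show "a \<le> hinge_comb a c T x \<and> hinge_comb a c T x \<le> a + sum c T * x" if "0 \<le> x" for x
    using hinge_comb_bounds[OF T(2,3) that] by blast
  show "sum c T < \<beta>"
  proof (rule slope_less_beta[OF A])
    show "a - (\<Sum>\<sigma>\<in>T. c \<sigma> * \<sigma>) + sum c T * x \<le> hinge_comb a c T x" for x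
      by (rule hinge_comb_ge_linear[OF T(3)])
    show "expint f (hinge_comb a c T) < \<infinity>"
      using norm by simp
  qed
qed

lemma sorted_le_last:
  assumes "sorted xs" "x \<in> set xs"
  shows "x \<le> last xs"
proof -
  have "xs \<noteq> []"
    using assms(2) by auto
  then have "xs = butlast xs @ [last xs]"
    by simp
  then have "sorted (butlast xs @ [last xs])" "x \<in> set (butlast xs @ [last xs])"
    using assms by metis+
  then show ?thesis
    unfolding sorted_append by auto
qed

theorem mainTheorem3:
  fixes f :: "real \<Rightarrow> real" and \<beta> :: real and xs :: "real list"
    and \<theta> \<theta>h :: "real \<Rightarrow> real" and \<epsilon> :: real
  assumes A: "standing_assms f \<beta>"
    and data: "xs \<noteq> []" "sorted xs" "\<forall>x\<in>set xs. x \<ge> 0"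
    and hat_max: "\<theta>h \<in> Theta" "\<forall>\<eta>\<in>Theta. LL f xs \<eta> \<le> LL f xs \<theta>h"
    and hat_known: "\<theta>h \<in> Theta1 f" "\<theta>h \<in> PL"
      "breakpoints \<theta>h \<subseteq> ({0} \<union> {hd xs..last xs}) - set xs"
    and eps: "\<epsilon> > 0"
    and th: "\<theta> \<in> Theta1 f" "\<theta> \<in> PL"
    and locopt: "\<theta> \<in> Theta \<inter> PL_on (breakpoints \<theta>)"
      "\<forall>v\<in>Theta \<inter> PL_on (breakpoints \<theta>). LL f xs v \<le> LL f xs \<theta>"
    and DLbound: "(SUP \<tau>\<in>{0..}. DL f xs \<theta> (Vtau \<tau>)) < ereal \<epsilon>"
  shows "LL f xs \<theta>h - LL f xs \<theta> \<le> ereal (rderiv \<theta>h (last xs) * \<epsilon>)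
         \<and> rderiv \<theta>h (last xs) * \<epsilon> < \<beta> * \<epsilon>"
proof -
  obtain T a c where T: "finite T" "T \<subseteq> {0..}" "\<forall>\<sigma>\<in>T. 0 \<le> c \<sigma>"
    and \<theta>_eq: "\<forall>x\<ge>0. \<theta> x = hinge_comb a c T x" and norm: "expint f (hinge_comb a c T) = 1"
    by (rule Theta1_PL_hinge_representation[OF th])
  obtain T' a' c' where T': "finite T'" "T' \<subseteq> {0..}" "\<forall>\<sigma>\<in>T'. 0 \<le> c' \<sigma>"
    and \<theta>h_eq: "\<forall>x\<ge>0. \<theta>h x = hinge_comb a' c' T' x" and norm': "expint f (hinge_comb a' c' T') = 1"
    by (rule Theta1_PL_hinge_representation[OF hat_known(1,2)])
  interpret exp_tilt f \<beta> "hinge_comb a c T" a "sum c T"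
    using exp_tilt_hinge_comb[OF A T norm] .
  have "emp_mean xs \<theta>h - emp_mean xs \<theta> \<le> sum c' {\<sigma>\<in>T'. \<sigma> \<le> last xs} * \<epsilon>"
    unfolding emp_mean_cong_nonneg[OF data(3) \<theta>_eq] emp_mean_cong_nonneg[OF data(3) \<theta>h_eq]
  proof (rule emp_mean_gain_le[OF data(1) _ _ T'(1,3) norm'])
    show "\<forall>x\<in>set xs. x \<le> last xs"
      using data(2) sorted_le_last by blast
    show "LL f xs (\<lambda>x. s * hinge_comb a c T x) \<le> LL f xs (hinge_comb a c T)" if "0 < s" for s
      using LL_cmult_le_if_local_optimum[OF locopt that] LL_cong[OF data(3) \<theta>_eq]
        LL_cong[OF data(3), of "\<lambda>x. s * \<theta> x" "\<lambda>x. s * hinge_comb a c T x"] \<theta>_eq by simp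
    show "DL f xs (hinge_comb a c T) (Vtau \<sigma>) \<le> ereal \<epsilon>" if "\<sigma> \<in> T'" for \<sigma>
    proof -
      have "DL f xs \<theta> (Vtau \<sigma>) \<le> (SUP \<tau>\<in>{0..}. DL f xs \<theta> (Vtau \<tau>))"
        using T'(2) that by (intro SUP_upper) auto
      then show ?thesis
        using DLbound DL_cong[OF data(3) \<theta>_eq] by simp
    qed
  qed
  moreover have "rderiv \<theta>h (last xs) = sum c' {\<sigma>\<in>T'. \<sigma> \<le> last xs}"
    using rderiv_hinge_comb[OF T'(1) _ \<theta>h_eq] data by simp
  moreover have "sum c' {\<sigma>\<in>T'. \<sigma> \<le> last xs} \<le> sum c' T'"
    using T' by (intro sum_mono2) auto
  moreover have "sum c' T' < \<beta>"
    by (rule exp_tilt.slope_less[OF exp_tilt_hinge_comb[OF A T' norm']])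
  moreover have "LL f xs \<theta>h - LL f xs \<theta> = ereal (emp_mean xs \<theta>h - emp_mean xs \<theta>)"
    using th(1) hat_known(1) by (simp add: Theta1_def LL_eq_emp_mean)
  ultimately show ?thesis
    using eps by simp
qed

end
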